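(* Let $n\ge 2$. The maps $\sigma_1,\dots,\sigma_{n-1}$ on the set $\widetilde{\mathcal T}_n=\mathcal T_n\times\mathbb Z/n\mathbb Z$ of augmented rooted labeled trees defined in the context define an action of the braid group $B_n$ on $\widetilde{\mathcal T}_n$: they are bijections satisfying $\sigma_i\sigma_j=\sigma_j\sigma_i$ for $|i-j|\ge2$ and $\sigma_i\sigma_{i+1}\sigma_i=\sigma_{i+1}\sigma_i\sigma_{i+1}$ for $1\le i\le n-2$.
   Context: $\mathcal T_n$ is the set of rooted trees with vertices labeled $1,\dots,n$; $v_i$ is the vertex labeled $i$. Maps $\sigma_i$ on $\mathcal T_n$: if $v_{i+1}$ is the root of $T$, $\sigma_iT$ is $T$ with labels $i,i+1$ interchanged. Otherwise form $T_+$ by adding a vertex $v_0$ as parent of the root, write $a\to b$ for "$a$ is the parent of $b$", and: (0) if neither of $v_i,v_{i+1}$ is the parent of the other and they have different parents, interchange labels $i,i+1$; (1) if $v_k\to v_i\to v_{i+1}$, make $v_k\to v_{i+1}\to v_i$, other relations unchanged; (2) if $v_k\to v_{i+1}\to v_i$, make $v_i,v_{i+1}$ both children of $v_k$ and interchange their sets of other children, other relations unchanged; (3) if $v_i,v_{i+1}$ share parent $v_k$, interchange their sets of children and then make $v_{i+1}$ a child of $v_i$; then delete $v_0$. Reduced weight in $T$ with root $v_r$: $\overline w(v_r)=1$; if $v_i$ is a child of the root, $\overline w(v_i)$ is the number of vertices in the subtree rooted at $v_i$ (including $v_i$); otherwise $\overline w(v_i)=0$. For $(T,\varepsilon)\in\widetilde{\mathcal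 T}_n$ with root $v_r$: $\sigma_i(T,\varepsilon)=(\sigma_iT,\varepsilon)$ if $i\ne r-1$, and $\sigma_{r-1}(T,\varepsilon)=(\sigma_{r-1}T,\varepsilon+\overline w(v_{r-1}))$ with $\overline w$ computed in $T$. *)

theory Defs
  imports Main
begin

text \<open>A rooted tree on vertices 1..n is represented by its parent function
  p :: nat => nat.  Vertex 0 plays the role of the auxiliary vertex v_0 of T_+:
  the root r satisfies p r = 0.  Outside {1..n} the function is 0 (canonical form).\<close>

definition is_tree :: "nat \<Rightarrow> (nat \<Rightarrow> nat) \<Rightarrow> bool" where
  "is_tree n p \<longleftrightarrow>
     (\<forall>v. v \<notin> {1..n} \<longrightarrow> p v = 0) \<and>
     (\<forall>v\<in>{1..n}. p v \<le> n) \<and>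
     card {v\<in>{1..n}. p v = 0} = 1 \<and>
     (\<forall>v\<in>{1..n}. \<exists>k. (p ^^ k) v = 0)"

definition trees :: "nat \<Rightarrow> (nat \<Rightarrow> nat) set" where
  "trees n = {p. is_tree n p}"

definition swp :: "nat \<Rightarrow> nat \<Rightarrow> nat" where
  "swp i x = (if x = i then Suc i else if x = Suc i then i else x)"

definition xch :: "nat \<Rightarrow> nat \<Rightarrow> (nat \<Rightarrow> nat) \<Rightarrow> nat \<Rightarrow> nat" where
  "xch a b p c = (if p c = a then b else if p c = b then a else p c)"

definition sigma :: "nat \<Rightarrow> (nat \<Rightarrow> nat) \<Rightarrow> (nat \<Rightarrow> nat)" where
  "sigma i p =
    (let a = i; b = Suc i in
     if p b = 0 then swp i \<circ> p \<circ> swp i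
     else if p a \<noteq> b \<and> p b \<noteq> a \<and> p a \<noteq> p b then swp i \<circ> p \<circ> swp i
     else if p b = a then p(a := b, b := p a)
     else if p a = b then (xch a b p)(a := p b, b := p b)
     else (xch a b p)(a := p a, b := a))"

definition subtree_size :: "nat \<Rightarrow> (nat \<Rightarrow> nat) \<Rightarrow> nat \<Rightarrow> nat" where
  "subtree_size n p v = card {c\<in>{1..n}. \<exists>k. (p ^^ k) c = v}"

definition red_weight :: "nat \<Rightarrow> (nat \<Rightarrow> nat) \<Rightarrow> nat \<Rightarrow> nat" where
  "red_weight n p v =
    (if p v = 0 then 1
     else if p (p v) = 0 then subtree_size n p v
     else 0)"

text \<open>Augmented trees: Z/nZ represented by residues {0..<n}.\<close>
definition aug_trees :: "nat \<Rightarrow> ((nat \<Rightarrow> nat) \<times> nat) set" where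
  "aug_trees n = trees n \<times> {..<n}"

definition sigma_aug :: "nat \<Rightarrow> nat \<Rightarrow> (nat \<Rightarrow> nat) \<times> nat \<Rightarrow> (nat \<Rightarrow> nat) \<times> nat" where
  "sigma_aug n i = (\<lambda>(p, e).
     if p (Suc i) = 0 then (sigma i p, (e + red_weight n p i) mod n)
     else (sigma i p, e))"

end

theory Submission
  imports Defs "HOL-Combinatorics.Transposition"
begin

(* A tree is handled through its parent function, vertex 0 playing the role of v_0, and sigma i
   becomes a move on the pair of labels (i, i + 1): it changes the parents of these two vertices
   and relabels their children, and it only ever compares labels.  Hence everything that has to be
   checked for the braid relation concerns the parents of v_i, v_(i+1), v_(i+2) up to equality of
   labels, which involves at most seven distinct labels: the relation for the trees and the equality
   of the reduced weights collected along both of its sides are verified exhaustively on a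
   seven-element type and transported back along an injective encoding.  The weights need the
   subtree sizes after a move, which follow from an explicit description of how ancestor sets
   change; the same description shows that moves map trees to trees.  Moves on disjoint pairs
   commute because each relabels the other's pair injectively, and bijectivity follows from
   injectivity on the finite set of augmented trees. *)

section \<open>Moves on a pair of labels\<close>

(* In move z a b p, z plays the role of v_0 and u = p a, w = p b are the old parents;
   move_other gives the new parent of a vertex whose old parent was v.  swap_case covers the
   case where b is the root together with case (0); otherwise w = a is case (1), u = b is
   case (2) and u = w is case (3). *)

definition swap_case :: "'a \<Rightarrow> 'a \<Rightarrow> 'a \<Rightarrow> 'a \<Rightarrow> 'a \<Rightarrow> bool" where
  "swap_case z a b u w \<longleftrightarrow> w = z \<or> (u \<noteq> b \<and> w \<noteq> a \<and> u \<noteq> w)"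

definition move_fst :: "'a \<Rightarrow> 'a \<Rightarrow> 'a \<Rightarrow> 'a \<Rightarrow> 'a \<Rightarrow> 'a" where
  "move_fst z a b u w =
     (if swap_case z a b u w then transpose a b w else if w = a then b else if u = b then w else u)"

definition move_snd :: "'a \<Rightarrow> 'a \<Rightarrow> 'a \<Rightarrow> 'a \<Rightarrow> 'a \<Rightarrow> 'a" where
  "move_snd z a b u w =
     (if swap_case z a b u w then transpose a b u else if w = a then u else if u = b then w else a)"

definition move_other :: "'a \<Rightarrow> 'a \<Rightarrow> 'a \<Rightarrow> 'a \<Rightarrow> 'a \<Rightarrow> 'a \<Rightarrow> 'a" where
  "move_other z a b u w v = (if \<not> swap_case z a b u w \<and> w = a then v else transpose a b v)"

definition move :: "'a \<Rightarrow> 'a \<Rightarrow> 'a \<Rightarrow> ('a \<Rightarrow> 'a) \<Rightarrow> 'a \<Rightarrow> 'a" where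
  "move z a b p x =
     (if x = a then move_fst z a b (p a) (p b) else if x = b then move_snd z a b (p a) (p b)
      else move_other z a b (p a) (p b) (p x))"

(* The new subtree size of a from the old sizes s of a and t of b: in case (1) the subtree of b
   is cut out of that of a, in case (2) the other way round, and in case (3) the two are merged. *)

definition move_size :: "'a \<Rightarrow> 'a \<Rightarrow> 'a \<Rightarrow> 'a \<Rightarrow> 'a \<Rightarrow> int \<Rightarrow> int \<Rightarrow> int" where
  "move_size z a b u w s t =
     (if swap_case z a b u w then t else if w = a then s - t else if u = b then t - s else s + t)"

lemma move_closed:
  "a \<in> S \<Longrightarrow> b \<in> S \<Longrightarrow> u \<in> S \<Longrightarrow> w \<in> S \<Longrightarrow> move_fst z a b u w \<in> S"
  "a \<in> S \<Longrightarrow> b \<in> S \<Longrightarrow> u \<in> S \<Longrightarrow> w \<in> S \<Longrightarrow> move_snd z a b u w \<in> S"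
  "a \<in> S \<Longrightarrow> b \<in> S \<Longrightarrow> v \<in> S \<Longrightarrow> move_other z a b u w v \<in> S"
  by (simp_all add: move_fst_def move_snd_def move_other_def transpose_def)

lemma move_in:
  "(\<And>v. p v \<in> S) \<Longrightarrow> a \<in> S \<Longrightarrow> b \<in> S \<Longrightarrow> move z a b p x \<in> S"
  by (simp add: move_def move_closed)

lemma move_eq_root_iff:
  "z \<noteq> a \<Longrightarrow> z \<noteq> b \<Longrightarrow> move z a b p x = z \<longleftrightarrow> p (transpose a b x) = z"
  by (auto simp: move_def move_fst_def move_snd_def move_other_def swap_case_def transpose_def)

lemma move_other_inj: "inj (move_other z a b u w)"
  by (auto intro!: injI simp: move_other_def split: if_splits dest: transpose_eq_imp_eq)

lemma move_other_fixed: "v \<noteq> a \<Longrightarrow> v \<noteq> b \<Longrightarrow> move_other z a b u w v = v"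
  by (simp add: move_other_def)

lemma move_swap_case:
  "swap_case z a b (p a) (p b) \<Longrightarrow> move z a b p = transpose a b \<circ> p \<circ> transpose a b"
  by (auto simp: fun_eq_iff move_def move_fst_def move_snd_def move_other_def)

lemma move_parent_case:
  "\<not> swap_case z a b (p a) (p b) \<Longrightarrow> p b = a \<Longrightarrow> move z a b p = p(a := b, b := p a)"
  by (auto simp: fun_eq_iff move_def move_fst_def move_snd_def move_other_def)

lemma move_child_case:
  "\<not> swap_case z a b (p a) (p b) \<Longrightarrow> p b \<noteq> a \<Longrightarrow> p a = b \<Longrightarrow>
   move z a b p = (\<lambda>x. if x = a \<or> x = b then p b else transpose a b (p x))"
  by (auto simp: fun_eq_iff move_def move_fst_def move_snd_def move_other_def swap_case_def)

lemma move_sibling_case: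
  "\<not> swap_case z a b (p a) (p b) \<Longrightarrow> p b \<noteq> a \<Longrightarrow> p a \<noteq> b \<Longrightarrow>
   p a = p b \<and> move z a b p = (\<lambda>x. if x = a then p a else if x = b then a else transpose a b (p x))"
  by (auto simp: fun_eq_iff move_def move_fst_def move_snd_def move_other_def swap_case_def)

lemma move_inj:
  assumes "distinct [z, a, b]" and "move z a b p = move z a b p'"
    and "p a \<noteq> a" "p b \<noteq> b" "\<not> (p a = b \<and> p b = a)" "\<not> (p a = z \<and> p b = z)"
    and "p' a \<noteq> a" "p' b \<noteq> b" "\<not> (p' a = b \<and> p' b = a)" "\<not> (p' a = z \<and> p' b = z)"
  shows "p = p'"
proof -
  have "move_fst z a b (p a) (p b) = move_fst z a b (p' a) (p' b)"
    and "move_snd z a b (p a) (p b) = move_snd z a b (p' a) (p' b)"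
    using fun_cong[OF assms(2), of a] fun_cong[OF assms(2), of b] assms(1) by (auto simp: move_def)
  then have ab: "p a = p' a" "p b = p' b"
    using assms(1,3-) by (auto simp: move_fst_def move_snd_def swap_case_def transpose_def split: if_splits)
  have "move_other z a b (p a) (p b) (p x) = move_other z a b (p a) (p b) (p' x)" if "x \<noteq> a" "x \<noteq> b" for x
    using fun_cong[OF assms(2), of x] that ab by (simp add: move_def)
  then show "p = p'"
    using ab injD[OF move_other_inj] by (metis ext)
qed

lemma transpose_rename:
  "inj_on f S \<Longrightarrow> a \<in> S \<Longrightarrow> b \<in> S \<Longrightarrow> v \<in> S \<Longrightarrow> transpose (f a) (f b) (f v) = f (transpose a b v)"
  by (auto simp: transpose_def inj_on_eq_iff)

lemma swap_case_rename:
  "inj_on f S \<Longrightarrow> z \<in> S \<Longrightarrow> a \<in> S \<Longrightarrow> b \<in> S \<Longrightarrow> u \<in> S \<Longrightarrow> w \<in> S \<Longrightarrow>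
   swap_case (f z) (f a) (f b) (f u) (f w) \<longleftrightarrow> swap_case z a b u w"
  by (simp add: swap_case_def inj_on_eq_iff)

lemma move_rename:
  "inj_on f S \<Longrightarrow> z \<in> S \<Longrightarrow> a \<in> S \<Longrightarrow> b \<in> S \<Longrightarrow> u \<in> S \<Longrightarrow> w \<in> S \<Longrightarrow>
     move_fst (f z) (f a) (f b) (f u) (f w) = f (move_fst z a b u w)"
  "inj_on f S \<Longrightarrow> z \<in> S \<Longrightarrow> a \<in> S \<Longrightarrow> b \<in> S \<Longrightarrow> u \<in> S \<Longrightarrow> w \<in> S \<Longrightarrow>
     move_snd (f z) (f a) (f b) (f u) (f w) = f (move_snd z a b u w)"
  "inj_on f S \<Longrightarrow> z \<in> S \<Longrightarrow> a \<in> S \<Longrightarrow> b \<in> S \<Longrightarrow> u \<in> S \<Longrightarrow> w \<in> S \<Longrightarrow> v \<in> S \<Longrightarrow>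
     move_other (f z) (f a) (f b) (f u) (f w) (f v) = f (move_other z a b u w v)"
  "inj_on f S \<Longrightarrow> z \<in> S \<Longrightarrow> a \<in> S \<Longrightarrow> b \<in> S \<Longrightarrow> u \<in> S \<Longrightarrow> w \<in> S \<Longrightarrow>
     move_size (f z) (f a) (f b) (f u) (f w) = move_size z a b u w"
  by (auto simp: move_fst_def move_snd_def move_other_def move_size_def swap_case_rename
      transpose_rename inj_on_eq_iff fun_eq_iff)

lemma move_equivariant:
  assumes "inj g" "g z = z" "g a = a" "g b = b"
  shows "move_fst z a b (g u) (g w) = g (move_fst z a b u w)"
    and "move_snd z a b (g u) (g w) = g (move_snd z a b u w)"
    and "move_other z a b (g u) (g w) = move_other z a b u w"
proof -
  have inj: "inj_on g UNIV" using assms(1) .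
  show "move_fst z a b (g u) (g w) = g (move_fst z a b u w)"
    and "move_snd z a b (g u) (g w) = g (move_snd z a b u w)"
    using move_rename(1,2)[OF inj] assms(2-4) by (metis UNIV_I)+
  have "swap_case z a b (g u) (g w) \<longleftrightarrow> swap_case z a b u w"
    using swap_case_rename[OF inj] assms(2-4) by (metis UNIV_I)
  moreover have "g w = a \<longleftrightarrow> w = a"
    using assms(1,3) by (metis injD)
  ultimately show "move_other z a b (g u) (g w) = move_other z a b u w"
    by (simp add: move_other_def fun_eq_iff)
qed

lemma transpose_disjoint_commute:
  "a \<noteq> c \<Longrightarrow> a \<noteq> d \<Longrightarrow> b \<noteq> c \<Longrightarrow> b \<noteq> d \<Longrightarrow>
   transpose a b (transpose c d v) = transpose c d (transpose a b v)"
  by (auto simp: transpose_def)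

lemma move_other_commute:
  assumes "a \<noteq> c" "a \<noteq> d" "b \<noteq> c" "b \<noteq> d"
  shows "move_other z a b u w (move_other z c d u' w' v) = move_other z c d u' w' (move_other z a b u w v)"
proof -
  have "move_other z a b u w = (if \<not> swap_case z a b u w \<and> w = a then id else transpose a b)"
    and "move_other z c d u' w' = (if \<not> swap_case z c d u' w' \<and> w' = c then id else transpose c d)"
    by (auto simp: move_other_def fun_eq_iff)
  then show ?thesis
    using assms by (simp add: transpose_disjoint_commute)
qed

lemma move_commute_at:
  assumes "distinct [z, a, b]" "distinct [z, c, d]" "a \<notin> {c, d}" "b \<notin> {c, d}" "x \<notin> {c, d}"
  shows "move z a b (move z c d p) x = move z c d (move z a b p) x"
proof -
  define f where "f = move_other z a b (p a) (p b)"
  define g where "g = move_other z c d (p c) (p d)"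
  have g: "inj g" "g z = z" "g a = a" "g b = b"
    using assms by (auto simp: g_def move_other_inj intro!: move_other_fixed)
  have f: "inj f" "f z = z" "f c = c" "f d = d"
    using assms by (auto simp: f_def move_other_inj intro!: move_other_fixed)
  have g': "move_other z c d (f (p c)) (f (p d)) = g"
    unfolding g_def by (rule move_equivariant(3)[OF f])
  have f': "move_other z a b (g (p a)) (g (p b)) = f"
    unfolding f_def by (rule move_equivariant(3)[OF g])
  have "f (g v) = g (f v)" for v
    unfolding f_def g_def using assms by (intro move_other_commute) auto
  then show ?thesis
    using assms g' f' by (auto simp: move_def move_equivariant(1,2)[OF g] f_def[symmetric] g_def[symmetric])
qed

lemma move_commute:
  assumes "distinct [z, a, b]" "distinct [z, c, d]" "a \<notin> {c, d}" "b \<notin> {c, d}"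
  shows "move z a b (move z c d p) = move z c d (move z a b p)"
proof
  fix x
  show "move z a b (move z c d p) x = move z c d (move z a b p) x"
  proof (cases "x \<in> {c, d}")
    case True
    then have "x \<notin> {a, b}" using assms(3,4) by auto
    then show ?thesis using move_commute_at[of z c d a b x p] assms by auto
  qed (use move_commute_at[OF assms] in blast)
qed

section \<open>Three consecutive labels\<close>

(* A triple holds the parents of a, b, c.  move_ab and move_bc are the moves on (a, b) and (b, c)
   seen on the triple, other_ab and other_bc their effect on the parent of any other vertex.
   top_ab says that b is the root and a its child, the situation in which the move on (a, b)
   carries a reduced weight. *)

type_synonym 'a triple = "'a \<times> 'a \<times> 'a"

abbreviation map_triple :: "('a \<Rightarrow> 'b) \<Rightarrow> 'a triple \<Rightarrow> 'b triple" where
  "map_triple f \<equiv> map_prod f (map_prod f f)"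

definition move_ab :: "'a \<Rightarrow> 'a \<Rightarrow> 'a \<Rightarrow> 'a triple \<Rightarrow> 'a triple" where
  "move_ab z a b = (\<lambda>(u, w, y). (move_fst z a b u w, move_snd z a b u w, move_other z a b u w y))"

definition move_bc :: "'a \<Rightarrow> 'a \<Rightarrow> 'a \<Rightarrow> 'a triple \<Rightarrow> 'a triple" where
  "move_bc z b c = (\<lambda>(u, w, y). (move_other z b c w y u, move_fst z b c w y, move_snd z b c w y))"

definition other_ab :: "'a \<Rightarrow> 'a \<Rightarrow> 'a \<Rightarrow> 'a triple \<Rightarrow> 'a \<Rightarrow> 'a" where
  "other_ab z a b = (\<lambda>(u, w, y). move_other z a b u w)"

definition other_bc :: "'a \<Rightarrow> 'a \<Rightarrow> 'a \<Rightarrow> 'a triple \<Rightarrow> 'a \<Rightarrow> 'a" where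
  "other_bc z b c = (\<lambda>(u, w, y). move_other z b c w y)"

definition size_ab :: "'a \<Rightarrow> 'a \<Rightarrow> 'a \<Rightarrow> 'a triple \<Rightarrow> int \<Rightarrow> int \<Rightarrow> int" where
  "size_ab z a b = (\<lambda>(u, w, y). move_size z a b u w)"

definition top_ab :: "'a \<Rightarrow> 'a \<Rightarrow> 'a triple \<Rightarrow> bool" where
  "top_ab z b = (\<lambda>(u, w, y). w = z \<and> u = b)"

definition top_bc :: "'a \<Rightarrow> 'a \<Rightarrow> 'a triple \<Rightarrow> bool" where
  "top_bc z c = (\<lambda>(u, w, y). y = z \<and> w = c)"

definition admissible :: "'a \<Rightarrow> 'a \<Rightarrow> 'a \<Rightarrow> 'a \<Rightarrow> 'a triple \<Rightarrow> bool" where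
  "admissible z a b c = (\<lambda>(u, w, y).
     u \<noteq> a \<and> w \<noteq> b \<and> y \<noteq> c \<and> \<not> (u = b \<and> w = a) \<and> \<not> (w = c \<and> y = b) \<and> \<not> (u = c \<and> y = a)
     \<and> \<not> (u = b \<and> w = c \<and> y = a) \<and> \<not> (u = c \<and> y = b \<and> w = a)
     \<and> \<not> (u = z \<and> w = z) \<and> \<not> (u = z \<and> y = z) \<and> \<not> (w = z \<and> y = z))"

definition braid_local :: "'a \<Rightarrow> 'a \<Rightarrow> 'a \<Rightarrow> 'a \<Rightarrow> 'a triple \<Rightarrow> bool" where
  "braid_local z a b c t \<longleftrightarrow>
     (let t1 = move_ab z a b t; t2 = move_bc z b c t1; s1 = move_bc z b c t; s2 = move_ab z a b s1 in
      move_ab z a b t2 = move_bc z b c s2 \<and>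
      (\<forall>v\<in>{a, b, c}. other_ab z a b t2 (other_bc z b c t1 (other_ab z a b t v)) =
                      other_bc z b c s2 (other_ab z a b s1 (other_bc z b c t v))))"

(* s and s' stand for the subtree sizes of a and b. *)

definition weight_local :: "'a \<Rightarrow> 'a \<Rightarrow> 'a \<Rightarrow> 'a \<Rightarrow> 'a triple \<Rightarrow> int \<Rightarrow> int \<Rightarrow> bool" where
  "weight_local z a b c t s s' \<longleftrightarrow>
     (let t1 = move_ab z a b t; t2 = move_bc z b c t1; s1 = move_bc z b c t; s2 = move_ab z a b s1 in
      (if top_ab z b t then s else 0) + (if top_bc z c t1 then s else 0)
        + (if top_ab z b t2 then size_ab z a b t s s' else 0) =
      (if top_bc z c t then s' else 0) + (if top_ab z b s1 then s else 0) + (if top_bc z c s2 then s else 0))"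

lemma triple_rename:
  assumes f: "inj_on f S" and S: "z \<in> S" "a \<in> S" "b \<in> S" "c \<in> S" and t: "t \<in> S \<times> S \<times> S"
  shows "move_ab (f z) (f a) (f b) (map_triple f t) = map_triple f (move_ab z a b t)"
    and "move_bc (f z) (f b) (f c) (map_triple f t) = map_triple f (move_bc z b c t)"
    and "v \<in> S \<Longrightarrow> other_ab (f z) (f a) (f b) (map_triple f t) (f v) = f (other_ab z a b t v)"
    and "v \<in> S \<Longrightarrow> other_bc (f z) (f b) (f c) (map_triple f t) (f v) = f (other_bc z b c t v)"
    and "size_ab (f z) (f a) (f b) (map_triple f t) = size_ab z a b t"
    and "top_ab (f z) (f b) (map_triple f t) \<longleftrightarrow> top_ab z b t"
    and "top_bc (f z) (f c) (map_triple f t) \<longleftrightarrow> top_bc z c t"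
    and "admissible (f z) (f a) (f b) (f c) (map_triple f t) \<longleftrightarrow> admissible z a b c t"
proof -
  obtain u w y where t': "t = (u, w, y)" "u \<in> S" "w \<in> S" "y \<in> S" using t by auto
  note m = move_rename[OF f] S t'(2-4)
  show "move_ab (f z) (f a) (f b) (map_triple f t) = map_triple f (move_ab z a b t)"
    unfolding t'(1) move_ab_def by (simp add: m)
  show "move_bc (f z) (f b) (f c) (map_triple f t) = map_triple f (move_bc z b c t)"
    unfolding t'(1) move_bc_def by (simp add: m)
  show "other_ab (f z) (f a) (f b) (map_triple f t) (f v) = f (other_ab z a b t v)" if "v \<in> S"
    unfolding t'(1) other_ab_def by (simp add: m that)
  show "other_bc (f z) (f b) (f c) (map_triple f t) (f v) = f (other_bc z b c t v)" if "v \<in> S"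
    unfolding t'(1) other_bc_def by (simp add: m that)
  show "size_ab (f z) (f a) (f b) (map_triple f t) = size_ab z a b t"
    unfolding t'(1) size_ab_def by (simp add: m)
  show "top_ab (f z) (f b) (map_triple f t) \<longleftrightarrow> top_ab z b t"
    unfolding t'(1) top_ab_def by (simp add: inj_on_eq_iff[OF f] S t'(2-4))
  show "top_bc (f z) (f c) (map_triple f t) \<longleftrightarrow> top_bc z c t"
    unfolding t'(1) top_bc_def by (simp add: inj_on_eq_iff[OF f] S t'(2-4))
  show "admissible (f z) (f a) (f b) (f c) (map_triple f t) \<longleftrightarrow> admissible z a b c t"
    unfolding t'(1) admissible_def by (simp add: inj_on_eq_iff[OF f] S t'(2-4))
qed

lemma triple_closed:
  assumes "a \<in> S" "b \<in> S" "c \<in> S" "t \<in> S \<times> S \<times> S"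
  shows "move_ab z a b t \<in> S \<times> S \<times> S" "move_bc z b c t \<in> S \<times> S \<times> S"
    "v \<in> S \<Longrightarrow> other_ab z a b t v \<in> S" "v \<in> S \<Longrightarrow> other_bc z b c t v \<in> S"
  using assms by (auto simp: move_ab_def move_bc_def other_ab_def other_bc_def move_closed)

lemma local_rename:
  assumes f: "inj_on f S" and S: "z \<in> S" "a \<in> S" "b \<in> S" "c \<in> S" and t: "t \<in> S \<times> S \<times> S"
  shows "braid_local (f z) (f a) (f b) (f c) (map_triple f t) \<longleftrightarrow> braid_local z a b c t"
    and "weight_local (f z) (f a) (f b) (f c) (map_triple f t) s s' \<longleftrightarrow> weight_local z a b c t s s'"
proof -
  have inj3: "inj_on (map_triple f) (S \<times> S \<times> S)"
    using f by (intro map_prod_inj_on)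
  note simps = triple_rename[OF f S] triple_closed[OF S(2-4)] inj_on_eq_iff[OF inj3] inj_on_eq_iff[OF f]
  show "braid_local (f z) (f a) (f b) (f c) (map_triple f t) \<longleftrightarrow> braid_local z a b c t"
    using t S unfolding braid_local_def Let_def by (simp add: simps)
  show "weight_local (f z) (f a) (f b) (f c) (map_triple f t) s s' \<longleftrightarrow> weight_local z a b c t s s'"
    using t S unfolding weight_local_def Let_def by (simp add: simps)
qed

(* braid_local and weight_local only compare labels, and the labels involved are z, a, b, c and
   the three parents; so they are checked on seven labels and transported by an injective
   encoding. *)

datatype label = Z | A | B | C | O1 | O2 | O3

lemma model_braid:
  "\<forall>u\<in>{Z,A,B,C,O1,O2,O3}. \<forall>w\<in>{Z,A,B,C,O1,O2,O3}. \<forall>y\<in>{Z,A,B,C,O1,O2,O3}.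
     admissible Z A B C (u, w, y) \<longrightarrow> braid_local Z A B C (u, w, y)"
  by code_simp

lemma model_weight:
  "\<forall>u\<in>{Z,A,B,C,O1,O2,O3}. \<forall>w\<in>{Z,A,B,C,O1,O2,O3}. \<forall>y\<in>{Z,A,B,C,O1,O2,O3}.
     admissible Z A B C (u, w, y) \<longrightarrow> weight_local Z A B C (u, w, y) s s'"
  by (simp add: admissible_def weight_local_def move_ab_def move_bc_def size_ab_def top_ab_def top_bc_def
      move_fst_def move_snd_def move_other_def move_size_def swap_case_def)

lemma label_cases: "v \<in> {Z, A, B, C, O1, O2, O3}"
  by (cases v) simp_all

lemma model_local:
  assumes "admissible Z A B C t"
  shows "braid_local Z A B C t" and "weight_local Z A B C t s s'"
proof -
  obtain u w y where "t = (u, w, y)"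
    by (cases t)
  then show "braid_local Z A B C t" and "weight_local Z A B C t s s'"
    using model_braid model_weight label_cases assms by blast+
qed

definition encode :: "'a \<Rightarrow> 'a \<Rightarrow> 'a \<Rightarrow> 'a \<Rightarrow> 'a \<Rightarrow> 'a \<Rightarrow> 'a \<Rightarrow> label" where
  "encode z a b c u w x =
     (if x = z then Z else if x = a then A else if x = b then B else if x = c then C
      else if x = u then O1 else if x = w then O2 else O3)"

definition decode :: "'a \<Rightarrow> 'a \<Rightarrow> 'a \<Rightarrow> 'a \<Rightarrow> 'a \<Rightarrow> 'a \<Rightarrow> 'a \<Rightarrow> label \<Rightarrow> 'a" where
  "decode z a b c u w y v = (case v of Z \<Rightarrow> z | A \<Rightarrow> a | B \<Rightarrow> b | C \<Rightarrow> c | O1 \<Rightarrow> u | O2 \<Rightarrow> w | O3 \<Rightarrow> y)"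

lemma local_relations:
  assumes "distinct [z, a, b, c]" and "admissible z a b c t"
  shows "braid_local z a b c t" and "weight_local z a b c t s s'"
proof -
  obtain u w y where t: "t = (u, w, y)"
    by (cases t)
  define S where "S = {z, a, b, c, u, w, y}"
  define f where "f = encode z a b c u w"
  have "decode z a b c u w y (f x) = x" if "x \<in> S" for x
    using that unfolding S_def f_def encode_def by (elim insertE emptyE) (simp_all add: decode_def)
  then have f: "inj_on f S"
    by (rule inj_on_inverseI)
  have S: "z \<in> S" "a \<in> S" "b \<in> S" "c \<in> S" "t \<in> S \<times> S \<times> S"
    unfolding S_def t by simp_all
  have fv: "f z = Z" "f a = A" "f b = B" "f c = C"
    using assms(1) by (auto simp: f_def encode_def)
  have "admissible Z A B C (map_triple f t)"
    using triple_rename(8)[OF f S] assms(2) fv by simp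
  then have "braid_local Z A B C (map_triple f t)" "weight_local Z A B C (map_triple f t) s s'"
    by (rule model_local)+
  then show "braid_local z a b c t" and "weight_local z a b c t s s'"
    using local_rename[OF f S] fv by simp_all
qed

lemma move_triple:
  assumes "distinct [a, b, c]"
  shows "(move z a b p a, move z a b p b, move z a b p c) = move_ab z a b (p a, p b, p c)"
    and "(move z b c p a, move z b c p b, move z b c p c) = move_bc z b c (p a, p b, p c)"
    and "x \<notin> {a, b} \<Longrightarrow> move z a b p x = other_ab z a b (p a, p b, p c) (p x)"
    and "x \<notin> {b, c} \<Longrightarrow> move z b c p x = other_bc z b c (p a, p b, p c) (p x)"
  using assms by (auto simp: move_def move_ab_def move_bc_def other_ab_def other_bc_def)

lemma move_braid:
  assumes "distinct [z, a, b, c]" and "admissible z a b c (p a, p b, p c)"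
  shows "move z a b (move z b c (move z a b p)) = move z b c (move z a b (move z b c p))"
proof
  fix x
  define t where "t = (p a, p b, p c)"
  define t1 t2 s1 s2 where "t1 = move_ab z a b t" and "t2 = move_bc z b c t1"
    and "s1 = move_bc z b c t" and "s2 = move_ab z a b s1"
  have "braid_local z a b c t"
    using local_relations(1) assms unfolding t_def .
  then have triples: "move_ab z a b t2 = move_bc z b c s2"
    and others: "\<And>v. v \<in> {a, b, c} \<Longrightarrow>
      other_ab z a b t2 (other_bc z b c t1 (other_ab z a b t v)) = other_bc z b c s2 (other_ab z a b s1 (other_bc z b c t v))"
    unfolding braid_local_def Let_def t1_def t2_def s1_def s2_def by blast+
  have d: "distinct [a, b, c]" using assms(1) by simp
  note tr = move_triple[OF d]
  have tri: "t1 = (move z a b p a, move z a b p b, move z a b p c)"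
    "t2 = (move z b c (move z a b p) a, move z b c (move z a b p) b, move z b c (move z a b p) c)"
    "s1 = (move z b c p a, move z b c p b, move z b c p c)"
    "s2 = (move z a b (move z b c p) a, move z a b (move z b c p) b, move z a b (move z b c p) c)"
    by (simp_all add: t1_def t2_def s1_def s2_def t_def tr(1,2))
  show "move z a b (move z b c (move z a b p)) x = move z b c (move z a b (move z b c p)) x"
  proof (cases "x \<in> {a, b, c}")
    case True
    then show ?thesis using triples d unfolding tri by (auto simp: tr(1,2)[symmetric])
  next
    case False
    then have x: "x \<notin> {a, b}" "x \<notin> {b, c}" by auto
    have "move z a b (move z b c (move z a b p)) x = other_ab z a b t2 (other_bc z b c t1 (other_ab z a b t (p x)))"
      and "move z b c (move z a b (move z b c p)) x = other_bc z b c s2 (other_ab z a b s1 (other_bc z b c t (p x)))"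
      unfolding tri t_def by (simp_all add: tr(3)[OF x(1)] tr(4)[OF x(2)])
    moreover have "other_ab z a b s v = v" "other_bc z b c s v = v" if "v \<notin> {a, b, c}" for s v
      using that by (auto simp: other_ab_def other_bc_def move_other_fixed split: prod.splits)
    ultimately show ?thesis
      using others[of "p x"] by (cases "p x \<in> {a, b, c}") simp_all
  qed
qed

section \<open>Ancestors in rooted trees\<close>

definition ancestors :: "('a \<Rightarrow> 'a) \<Rightarrow> 'a \<Rightarrow> 'a set" where
  "ancestors p v = range (\<lambda>k. (p ^^ k) v)"

lemma ancestors_step: "ancestors p v = insert v (ancestors p (p v))"
proof (intro set_eqI iffI)
  fix x assume "x \<in> ancestors p v"
  then obtain k where "x = (p ^^ k) v"
    by (auto simp: ancestors_def)
  then show "x \<in> insert v (ancestors p (p v))"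
    by (cases k) (auto simp: ancestors_def funpow_swap1)
next
  fix x assume "x \<in> insert v (ancestors p (p v))"
  then consider "x = v" | k where "x = (p ^^ k) (p v)"
    by (auto simp: ancestors_def)
  then show "x \<in> ancestors p v"
  proof cases
    case 1
    show ?thesis
      unfolding ancestors_def by (rule image_eqI[where x = 0]) (simp_all add: 1)
  next
    case 2
    show ?thesis
      unfolding ancestors_def by (rule image_eqI[where x = "Suc k"]) (simp_all add: 2 funpow_swap1)
  qed
qed

lemma ancestors_self [simp]: "v \<in> ancestors p v"
  by (subst ancestors_step) simp

lemma ancestors_trans:
  assumes "x \<in> ancestors p v"
  shows "ancestors p x \<subseteq> ancestors p v"
proof
  fix y assume "y \<in> ancestors p x"
  then obtain k m where "x = (p ^^ k) v" "y = (p ^^ m) x"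
    using assms by (auto simp: ancestors_def)
  then have "y = (p ^^ (m + k)) v"
    by (simp add: funpow_add)
  then show "y \<in> ancestors p v"
    by (simp add: ancestors_def)
qed

lemma ancestors_closed: "x \<in> ancestors p v \<Longrightarrow> p x \<in> ancestors p v"
  using ancestors_trans[of x p v] ancestors_step[of p x] by auto

lemma ancestors_chain:
  assumes "x \<in> ancestors p v" "y \<in> ancestors p v"
  shows "x \<in> ancestors p y \<or> y \<in> ancestors p x"
proof -
  obtain k m where "x = (p ^^ k) v" "y = (p ^^ m) v"
    using assms by (auto simp: ancestors_def)
  then have "x = (p ^^ (k - m)) y \<or> y = (p ^^ (m - k)) x"
    by (metis funpow_add comp_apply le_add_diff_inverse2 nat_le_linear)
  then show ?thesis
    by (auto simp: ancestors_def)
qed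

lemma ancestors_cong:
  assumes "\<And>x. x \<in> ancestors p v \<Longrightarrow> q x = p x"
  shows "ancestors q v = ancestors p v"
proof -
  have "(q ^^ k) v = (p ^^ k) v" for k
    by (induction k) (use assms in \<open>auto simp: ancestors_def\<close>)
  then show ?thesis
    by (simp add: ancestors_def)
qed

lemma ancestors_fixpoint:
  assumes "p v = v"
  shows "ancestors p v = {v}"
proof -
  have "(p ^^ k) v = v" for k
    by (induction k) (simp_all add: assms)
  then show ?thesis
    by (auto simp: ancestors_def)
qed

lemma ancestors_conj:
  assumes "\<And>x. h (h x) = x"
  shows "ancestors (h \<circ> p \<circ> h) (h v) = h ` ancestors p v"
proof -
  have "((h \<circ> p \<circ> h) ^^ k) (h v) = h ((p ^^ k) v)" for k
    by (induction k) (simp_all add: assms)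
  then show ?thesis
    by (auto simp: ancestors_def)
qed

definition descendants :: "nat \<Rightarrow> (nat \<Rightarrow> nat) \<Rightarrow> nat \<Rightarrow> nat set" where
  "descendants n p v = {c \<in> {1..n}. v \<in> ancestors p c}"

lemma subtree_size_descendants: "subtree_size n p v = card (descendants n p v)"
  by (simp add: subtree_size_def descendants_def ancestors_def eq_commute[of v] image_def)

lemma tree_outside: "is_tree n p \<Longrightarrow> v \<notin> {1..n} \<Longrightarrow> p v = 0"
  by (simp add: is_tree_def)

lemma tree_le: "is_tree n p \<Longrightarrow> p v \<le> n"
  by (cases "v \<in> {1..n}") (simp_all add: is_tree_def)

lemma tree_parent_in: "is_tree n p \<Longrightarrow> p v \<noteq> 0 \<Longrightarrow> p v \<in> {1..n}"
  using tree_le[of n p v] by simp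

lemma tree_root_fixed: "is_tree n p \<Longrightarrow> p 0 = 0"
  by (simp add: tree_outside)

lemma tree_root_unique:
  assumes "is_tree n p" "x \<in> {1..n}" "y \<in> {1..n}" "p x = 0" "p y = 0"
  shows "x = y"
proof -
  have "card {v \<in> {1..n}. p v = 0} = 1"
    using assms(1) by (simp add: is_tree_def)
  then obtain r where r: "{v \<in> {1..n}. p v = 0} = {r}"
    by (auto simp: card_1_singleton_iff)
  have "x \<in> {r}" "y \<in> {r}"
    using assms(2-) unfolding r[symmetric] by simp_all
  then show ?thesis
    by simp
qed

lemma tree_reaches_root:
  assumes "is_tree n p"
  shows "0 \<in> ancestors p v"
proof (cases "v \<in> {1..n}")
  case True
  then obtain k where "(p ^^ k) v = 0"
    using assms unfolding is_tree_def by blast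
  then show ?thesis
    unfolding ancestors_def by (rule image_eqI[OF sym]) simp
next
  case False
  then have "p v = 0"
    by (rule tree_outside[OF assms])
  then show ?thesis
    by (subst ancestors_step) simp
qed

definition depth :: "(nat \<Rightarrow> nat) \<Rightarrow> nat \<Rightarrow> nat" where
  "depth p v = (LEAST k. (p ^^ k) v = 0)"

lemma depth_parent_less:
  assumes "0 \<in> ancestors p v" "v \<noteq> 0"
  shows "depth p (p v) < depth p v"
proof -
  obtain k where "(p ^^ k) v = 0"
    using assms(1) by (auto simp: ancestors_def)
  then have root: "(p ^^ depth p v) v = 0"
    unfolding depth_def by (rule LeastI)
  then obtain m where m: "depth p v = Suc m"
    using assms(2) by (cases "depth p v") auto
  then have "(p ^^ m) (p v) = 0"
    using root by (simp add: funpow_swap1)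
  then have "depth p (p v) \<le> m"
    unfolding depth_def by (rule Least_le)
  then show ?thesis
    using m by simp
qed

lemma tree_depth_less: "is_tree n p \<Longrightarrow> v \<noteq> 0 \<Longrightarrow> depth p (p v) < depth p v"
  by (simp add: depth_parent_less tree_reaches_root)

lemma tree_acyclic:
  assumes t: "is_tree n p" and v: "v \<noteq> 0"
  shows "v \<notin> ancestors p (p v)"
proof
  have "(p ^^ k) (p v) = 0 \<or> depth p ((p ^^ k) (p v)) < depth p v" for k
  proof (induction k)
    case (Suc k)
    define y where "y = (p ^^ k) (p v)"
    show ?case
    proof (cases "y = 0")
      case True
      then show ?thesis using tree_root_fixed[OF t] by (simp add: y_def)
    next
      case False
      then have "depth p y < depth p v"
        using Suc.IH by (simp add: y_def)
      then show ?thesis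
        using tree_depth_less[OF t False] by (simp add: y_def)
    qed
  qed (simp add: tree_depth_less[OF t v])
  moreover assume "v \<in> ancestors p (p v)"
  then obtain k where "v = (p ^^ k) (p v)"
    by (auto simp: ancestors_def)
  ultimately show False
    using v by (metis less_irrefl)
qed

lemma tree_admissible:
  assumes t: "is_tree n p" and abc: "a \<in> {1..n}" "b \<in> {1..n}" "c \<in> {1..n}" "distinct [a, b, c]"
  shows "admissible 0 a b c (p a, p b, p c)"
proof -
  have "depth p (p x) < depth p x" if "x \<in> {a, b, c}" for x
    using tree_depth_less[OF t] that abc by auto
  then have "depth p (p a) < depth p a" "depth p (p b) < depth p b" "depth p (p c) < depth p c"
    by simp_all
  then show ?thesis
    using tree_root_unique[OF t, of a b] tree_root_unique[OF t, of a c] tree_root_unique[OF t, of b c] abc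
    unfolding admissible_def prod.case by auto
qed

lemma descendants_nested: "p b = a \<Longrightarrow> descendants n p b \<subseteq> descendants n p a"
  using ancestors_trans ancestors_step[of p b] by (fastforce simp: descendants_def)

lemma descendants_disjoint:
  assumes t: "is_tree n p" and ab: "a \<noteq> 0" "b \<noteq> 0" "a \<noteq> b" and sib: "p a = p b"
  shows "descendants n p a \<inter> descendants n p b = {}"
proof -
  have "a \<notin> ancestors p b" "b \<notin> ancestors p a"
    using tree_acyclic[OF t ab(1)] tree_acyclic[OF t ab(2)] ancestors_step[of p a] ancestors_step[of p b]
      ab(3) sib by auto
  then show ?thesis
    using ancestors_chain by (fastforce simp: descendants_def)
qed

section \<open>Moves on trees\<close>

definition relabel_set ::
    "(bool \<Rightarrow> bool \<Rightarrow> bool) \<Rightarrow> (bool \<Rightarrow> bool \<Rightarrow> bool) \<Rightarrow> 'a \<Rightarrow> 'a \<Rightarrow> 'a set \<Rightarrow> 'a set" where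
  "relabel_set P Q a b S =
     {x. if x = a then P (a \<in> S) (b \<in> S) else if x = b then Q (a \<in> S) (b \<in> S) else x \<in> S}"

lemma mem_relabel_set:
  "x \<in> relabel_set P Q a b S \<longleftrightarrow>
     (if x = a then P (a \<in> S) (b \<in> S) else if x = b then Q (a \<in> S) (b \<in> S) else x \<in> S)"
  by (simp add: relabel_set_def)

lemma relabel_set_insert:
  "c \<noteq> a \<Longrightarrow> c \<noteq> b \<Longrightarrow> relabel_set P Q a b (insert c S) = insert c (relabel_set P Q a b S)"
  by (auto simp: relabel_set_def)

lemma ancestors_relabel:
  assumes t: "is_tree n p" and ab: "a \<noteq> 0" "b \<noteq> 0"
    and PQ: "\<not> P False False" "\<not> Q False False"
    and h: "\<And>x. x \<noteq> a \<Longrightarrow> x \<noteq> b \<Longrightarrow> h x = x"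
    and q: "q 0 = 0" "\<And>c. c \<noteq> a \<Longrightarrow> c \<noteq> b \<Longrightarrow> q c = h (p c)"
    and qa: "ancestors q (h a) = relabel_set P Q a b (ancestors p a)"
    and qb: "ancestors q (h b) = relabel_set P Q a b (ancestors p b)"
  shows "ancestors q (h c) = relabel_set P Q a b (ancestors p c)"
proof (induction c rule: measure_induct_rule[of "depth p"])
  case (less c)
  consider "c = a" | "c = b" | "c = 0" | "c \<notin> {a, b, 0}"
    by blast
  then show ?case
  proof cases
    case 3
    have "relabel_set P Q a b {0} = {0}"
      using ab PQ by (auto simp: relabel_set_def)
    then show ?thesis
      using 3 ab h q(1) tree_root_fixed[OF t] by (simp add: ancestors_fixpoint)
  next
    case 4
    then have "ancestors q (h c) = insert c (ancestors q (h (p c)))"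
      using h q(2) by (subst ancestors_step) simp
    also have "\<dots> = insert c (relabel_set P Q a b (ancestors p (p c)))"
      using less tree_depth_less[OF t] 4 by simp
    also have "\<dots> = relabel_set P Q a b (ancestors p c)"
      using 4 by (subst (2) ancestors_step) (simp add: relabel_set_insert)
    finally show ?thesis .
  qed (use qa qb in simp_all)
qed

lemma ancestors_avoiding:
  assumes "a \<notin> ancestors p k" "b \<notin> ancestors p k"
    and "\<And>x. x \<noteq> a \<Longrightarrow> x \<noteq> b \<Longrightarrow> h x = x"
    and "\<And>x. x \<noteq> a \<Longrightarrow> x \<noteq> b \<Longrightarrow> q x = h (p x)"
  shows "ancestors q k = ancestors p k"
proof (rule ancestors_cong)
  fix x assume "x \<in> ancestors p k"
  then have "x \<notin> {a, b}" "p x \<notin> {a, b}"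
    using assms(1,2) ancestors_closed[of x p k] by auto
  then show "q x = p x"
    using assms(3,4) by simp
qed

lemma ancestors_move_swap:
  assumes "swap_case z a b (p a) (p b)"
  shows "ancestors (move z a b p) (transpose a b c) = relabel_set (\<lambda>s t. t) (\<lambda>s t. s) a b (ancestors p c)"
proof -
  have "ancestors (move z a b p) (transpose a b c) = transpose a b ` ancestors p c"
    using ancestors_conj[of "transpose a b" p c] move_swap_case[OF assms] by simp
  then show ?thesis
    unfolding set_eq_iff mem_relabel_set in_transpose_image_iff by (simp add: transpose_def)
qed

lemma ancestors_move_parent:
  assumes t: "is_tree n p" and ab: "a \<noteq> 0" "b \<noteq> 0" "a \<noteq> b"
    and case1: "\<not> swap_case 0 a b (p a) (p b)" "p b = a"
  shows "ancestors (move 0 a b p) c = relabel_set (\<lambda>s t. s \<and> \<not> t) (\<lambda>s t. s \<or> t) a b (ancestors p c)"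
proof -
  define q where "q = move 0 a b p"
  define k where "k = p a"
  have q: "q = p(a := b, b := k)"
    unfolding q_def k_def by (rule move_parent_case[OF case1])
  have pa: "ancestors p a = insert a (ancestors p k)" and pb: "ancestors p b = insert b (ancestors p a)"
    using ancestors_step[of p a] ancestors_step[of p b] case1(2) by (simp_all add: k_def)
  have nak: "a \<notin> ancestors p k" and nbk: "b \<notin> ancestors p k"
    using tree_acyclic[OF t ab(1)] tree_acyclic[OF t ab(2)] pa pb case1(2) ab(3) by (auto simp: k_def)
  have "ancestors q k = ancestors p k"
    by (rule ancestors_avoiding[OF nak nbk, where h = id]) (simp_all add: q)
  then have qb: "ancestors q b = insert b (ancestors p k)" and qa: "ancestors q a = insert a (ancestors q b)"
    using ancestors_step[of q b] ancestors_step[of q a] ab(3) by (simp_all add: q)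
  have "ancestors q (id c) = relabel_set (\<lambda>s t. s \<and> \<not> t) (\<lambda>s t. s \<or> t) a b (ancestors p c)"
  proof (rule ancestors_relabel[OF t ab(1,2)])
    show "ancestors q (id a) = relabel_set (\<lambda>s t. s \<and> \<not> t) (\<lambda>s t. s \<or> t) a b (ancestors p a)"
      and "ancestors q (id b) = relabel_set (\<lambda>s t. s \<and> \<not> t) (\<lambda>s t. s \<or> t) a b (ancestors p b)"
      using qa qb pa pb nak nbk ab(3) by (auto simp: relabel_set_def)
  qed (use ab tree_root_fixed[OF t] in \<open>simp_all add: q\<close>)
  then show ?thesis
    by (simp add: q_def)
qed

lemma ancestors_move_child:
  assumes t: "is_tree n p" and ab: "a \<noteq> 0" "b \<noteq> 0" "a \<noteq> b"
    and case2: "\<not> swap_case 0 a b (p a) (p b)" "p b \<noteq> a" "p a = b"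
  shows "ancestors (move 0 a b p) (transpose a b c) =
    relabel_set (\<lambda>s t. \<not> s \<and> t) (\<lambda>s t. s \<and> t) a b (ancestors p c)"
proof -
  define q where "q = move 0 a b p"
  define k where "k = p b"
  have q: "q = (\<lambda>x. if x = a \<or> x = b then k else transpose a b (p x))"
    unfolding q_def k_def by (rule move_child_case[OF case2])
  have pb: "ancestors p b = insert b (ancestors p k)" and pa: "ancestors p a = insert a (ancestors p b)"
    using ancestors_step[of p a] ancestors_step[of p b] case2(3) by (simp_all add: k_def)
  have nak: "a \<notin> ancestors p k" and nbk: "b \<notin> ancestors p k"
    using tree_acyclic[OF t ab(1)] tree_acyclic[OF t ab(2)] pa pb case2(3) ab(3) by (auto simp: k_def)
  have "ancestors q k = ancestors p k"
    by (rule ancestors_avoiding[OF nak nbk, where h = "transpose a b"]) (simp_all add: q)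
  then have qa: "ancestors q a = insert a (ancestors p k)" and qb: "ancestors q b = insert b (ancestors p k)"
    using ancestors_step[of q a] ancestors_step[of q b] by (simp_all add: q)
  show ?thesis
    unfolding q_def[symmetric]
  proof (rule ancestors_relabel[OF t ab(1,2)])
    show "ancestors q (transpose a b a) = relabel_set (\<lambda>s t. \<not> s \<and> t) (\<lambda>s t. s \<and> t) a b (ancestors p a)"
      and "ancestors q (transpose a b b) = relabel_set (\<lambda>s t. \<not> s \<and> t) (\<lambda>s t. s \<and> t) a b (ancestors p b)"
      using qa qb pa pb nak nbk ab(3) by (auto simp: relabel_set_def)
  qed (use ab tree_root_fixed[OF t] in \<open>simp_all add: q\<close>)
qed

lemma ancestors_move_sibling:
  assumes t: "is_tree n p" and ab: "a \<noteq> 0" "b \<noteq> 0" "a \<noteq> b"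
    and case3: "\<not> swap_case 0 a b (p a) (p b)" "p b \<noteq> a" "p a \<noteq> b"
  shows "ancestors (move 0 a b p) (transpose a b c) =
    relabel_set (\<lambda>s t. s \<or> t) (\<lambda>s t. s) a b (ancestors p c)"
proof -
  define q where "q = move 0 a b p"
  define k where "k = p a"
  have sib: "p a = p b" "move 0 a b p = (\<lambda>x. if x = a then p a else if x = b then a else transpose a b (p x))"
    using move_sibling_case[OF case3] by blast+
  have q: "q = (\<lambda>x. if x = a then k else if x = b then a else transpose a b (p x))" and pb: "p b = k"
    using sib by (simp_all only: q_def k_def)
  have pa: "ancestors p a = insert a (ancestors p k)" and pb': "ancestors p b = insert b (ancestors p k)"
    using ancestors_step[of p a] ancestors_step[of p b] pb by (simp_all add: k_def)
  have nak: "a \<notin> ancestors p k" and nbk: "b \<notin> ancestors p k"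
    using tree_acyclic[OF t ab(1)] tree_acyclic[OF t ab(2)] pb by (simp_all add: k_def)
  have "ancestors q k = ancestors p k"
    by (rule ancestors_avoiding[OF nak nbk, where h = "transpose a b"]) (simp_all add: q)
  then have qa: "ancestors q a = insert a (ancestors p k)" and qb: "ancestors q b = insert b (ancestors q a)"
    using ancestors_step[of q a] ancestors_step[of q b] ab(3) by (simp_all add: q)
  show ?thesis
    unfolding q_def[symmetric]
  proof (rule ancestors_relabel[OF t ab(1,2)])
    show "ancestors q (transpose a b a) = relabel_set (\<lambda>s t. s \<or> t) (\<lambda>s t. s) a b (ancestors p a)"
      and "ancestors q (transpose a b b) = relabel_set (\<lambda>s t. s \<or> t) (\<lambda>s t. s) a b (ancestors p b)"
      using qa qb pa pb' nak nbk ab(3) by (auto simp: relabel_set_def)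
  qed (use ab tree_root_fixed[OF t] in \<open>simp_all add: q\<close>)
qed

lemma subtree_size_relabel:
  assumes h: "bij_betw h {1..n} {1..n}"
    and anc: "\<And>c. ancestors q (h c) = relabel_set P Q a b (ancestors p c)"
  shows "subtree_size n q v = card {c \<in> {1..n}. v \<in> relabel_set P Q a b (ancestors p c)}"
proof -
  have "descendants n q v = h ` {c \<in> {1..n}. v \<in> ancestors q (h c)}"
  proof (intro set_eqI iffI)
    fix x assume "x \<in> descendants n q v"
    then have x: "x \<in> {1..n}" "v \<in> ancestors q x"
      by (simp_all add: descendants_def)
    moreover have "x \<in> h ` {1..n}"
      using h x(1) by (simp add: bij_betw_def)
    then obtain c where "c \<in> {1..n}" "x = h c"
      by blast
    then show "x \<in> h ` {c \<in> {1..n}. v \<in> ancestors q (h c)}"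
      using x by auto
  qed (use h in \<open>auto simp: descendants_def bij_betw_def\<close>)
  then have "descendants n q v = h ` {c \<in> {1..n}. v \<in> relabel_set P Q a b (ancestors p c)}"
    by (simp add: anc)
  moreover have "inj_on h {c \<in> {1..n}. v \<in> relabel_set P Q a b (ancestors p c)}"
    using h by (auto simp: bij_betw_def intro: inj_on_subset)
  ultimately show ?thesis
    by (simp add: subtree_size_descendants card_image)
qed

lemma descendants_combine:
  "{c \<in> {1..n}. a \<in> ancestors p c} = descendants n p a"
  "{c \<in> {1..n}. a \<in> ancestors p c \<and> b \<notin> ancestors p c} = descendants n p a - descendants n p b"
  "{c \<in> {1..n}. a \<notin> ancestors p c \<and> b \<in> ancestors p c} = descendants n p b - descendants n p a"
  "{c \<in> {1..n}. a \<in> ancestors p c \<or> b \<in> ancestors p c} = descendants n p a \<union> descendants n p b"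
  "{c \<in> {1..n}. a \<in> ancestors p c \<and> b \<in> ancestors p c} = descendants n p a \<inter> descendants n p b"
  by (auto simp: descendants_def)

lemma ancestors_move:
  assumes t: "is_tree n p" and ab: "a \<in> {1..n}" "b \<in> {1..n}" "a \<noteq> b"
  obtains h P Q where "bij_betw h {1..n} {1..n}"
    "\<And>c. ancestors (move 0 a b p) (h c) = relabel_set P Q a b (ancestors p c)"
    "int (card {c \<in> {1..n}. P (a \<in> ancestors p c) (b \<in> ancestors p c)}) =
       move_size 0 a b (p a) (p b) (int (subtree_size n p a)) (int (subtree_size n p b))"
    "card {c \<in> {1..n}. Q (a \<in> ancestors p c) (b \<in> ancestors p c)} = subtree_size n p a"
proof -
  have fin: "finite (descendants n p v)" for v
    by (simp add: descendants_def)
  note sizes = subtree_size_descendants descendants_combine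
  have ab0: "a \<noteq> 0" "b \<noteq> 0" using ab by auto
  have bij: "bij_betw id {1..n} {1..n}" "bij_betw (transpose a b) {1..n} {1..n}"
    using ab by simp_all
  consider (swap) "swap_case 0 a b (p a) (p b)"
    | (parent) "\<not> swap_case 0 a b (p a) (p b)" "p b = a"
    | (child) "\<not> swap_case 0 a b (p a) (p b)" "p b \<noteq> a" "p a = b"
    | (sibling) "\<not> swap_case 0 a b (p a) (p b)" "p b \<noteq> a" "p a \<noteq> b"
    by blast
  then show thesis
  proof cases
    case swap
    show thesis
      by (rule that[OF bij(2) ancestors_move_swap[OF swap]]) (unfold sizes, simp_all add: move_size_def swap)
  next
    case parent
    then have sub: "descendants n p b \<subseteq> descendants n p a"
      using descendants_nested[where p = p and b = b] by simp
    show thesis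
      by (rule that[OF bij(1), of "\<lambda>s t. s \<and> \<not> t" "\<lambda>s t. s \<or> t"])
        (insert ancestors_move_parent[OF t ab0 ab(3) parent] card_mono[OF fin sub] sub,
          unfold sizes, simp_all add: move_size_def parent parent(1)[unfolded parent(2)]
          card_Diff_subset[OF fin] of_nat_diff Un_absorb2)
  next
    case child
    then have sub: "descendants n p a \<subseteq> descendants n p b"
      using descendants_nested[where p = p and b = a] by simp
    show thesis
      by (rule that[OF bij(2) ancestors_move_child[OF t ab0 ab(3) child]])
        (insert card_mono[OF fin sub] sub, unfold sizes, simp_all add: move_size_def child
          child(1)[unfolded child(3)] card_Diff_subset[OF fin] of_nat_diff Int_absorb2)
  next
    case sibling
    then have "descendants n p a \<inter> descendants n p b = {}"
      using descendants_disjoint[OF t ab0 ab(3)] move_sibling_case[OF sibling] by blast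
    show thesis
      by (rule that[OF bij(2) ancestors_move_sibling[OF t ab0 ab(3) sibling]])
        (insert \<open>descendants n p a \<inter> descendants n p b = {}\<close>,
          unfold sizes, simp_all add: move_size_def sibling card_Un_disjoint[OF fin fin])
  qed
qed

lemma is_tree_move:
  assumes t: "is_tree n p" and ab: "a \<in> {1..n}" "b \<in> {1..n}" "a \<noteq> b"
  shows "is_tree n (move 0 a b p)"
proof -
  define q where "q = move 0 a b p"
  have root: "q v = 0 \<longleftrightarrow> p (transpose a b v) = 0" for v
    using ab by (simp add: q_def move_eq_root_iff)
  have range: "transpose a b v \<in> {1..n} \<longleftrightarrow> v \<in> {1..n}" for v
    using ab by (auto simp: transpose_def)
  have "{v \<in> {1..n}. q v = 0} = transpose a b ` {v \<in> {1..n}. p v = 0}"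
    unfolding set_eq_iff in_transpose_image_iff mem_Collect_eq root range by blast
  then have roots: "card {v \<in> {1..n}. q v = 0} = 1"
    using t by (simp add: card_image is_tree_def)
  have le: "q v \<le> n" for v
    using move_in[of p "{..n}" a b 0 v] tree_le[OF t] ab by (simp add: q_def)
  have outside: "q v = 0" if "v \<notin> {1..n}" for v
    using root[of v] tree_outside[OF t that] that ab by auto
  obtain h P Q where h: "bij_betw h {1..n} {1..n}"
    and anc: "\<And>c. ancestors q (h c) = relabel_set P Q a b (ancestors p c)"
    and "int (card {c \<in> {1..n}. P (a \<in> ancestors p c) (b \<in> ancestors p c)}) =
      move_size 0 a b (p a) (p b) (int (subtree_size n p a)) (int (subtree_size n p b))"
    and "card {c \<in> {1..n}. Q (a \<in> ancestors p c) (b \<in> ancestors p c)} = subtree_size n p a"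
    by (rule ancestors_move[OF t ab, folded q_def]) (rule that)
  have reach: "0 \<in> ancestors q v" if "v \<in> {1..n}" for v
  proof -
    have "v \<in> h ` {1..n}"
      using h that by (simp add: bij_betw_def)
    then obtain c where "v = h c"
      by blast
    then show ?thesis
      using anc[of c] tree_reaches_root[OF t, of c] ab by (simp add: mem_relabel_set)
  qed
  have "\<exists>k. (q ^^ k) v = 0" if "v \<in> {1..n}" for v
    using reach[OF that] unfolding ancestors_def by (metis imageE)
  then show ?thesis
    unfolding q_def[symmetric] is_tree_def using roots le outside by blast
qed

lemma subtree_size_move:
  assumes t: "is_tree n p" and ab: "a \<in> {1..n}" "b \<in> {1..n}" "a \<noteq> b"
  shows "int (subtree_size n (move 0 a b p) a) =
      move_size 0 a b (p a) (p b) (int (subtree_size n p a)) (int (subtree_size n p b))"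
    and "subtree_size n (move 0 a b p) b = subtree_size n p a"
    and "v \<notin> {a, b} \<Longrightarrow> subtree_size n (move 0 a b p) v = subtree_size n p v"
proof -
  obtain h P Q where h: "bij_betw h {1..n} {1..n}"
    and anc: "\<And>c. ancestors (move 0 a b p) (h c) = relabel_set P Q a b (ancestors p c)"
    and sa: "int (card {c \<in> {1..n}. P (a \<in> ancestors p c) (b \<in> ancestors p c)}) =
      move_size 0 a b (p a) (p b) (int (subtree_size n p a)) (int (subtree_size n p b))"
    and sb: "card {c \<in> {1..n}. Q (a \<in> ancestors p c) (b \<in> ancestors p c)} = subtree_size n p a"
    by (rule ancestors_move[OF t ab]) (rule that)
  note size = subtree_size_relabel[OF h anc]
  show "int (subtree_size n (move 0 a b p) a) =
      move_size 0 a b (p a) (p b) (int (subtree_size n p a)) (int (subtree_size n p b))"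
    using size[of a] sa by (simp add: mem_relabel_set)
  show "subtree_size n (move 0 a b p) b = subtree_size n p a"
    using size[of b] sb ab(3) by (simp add: mem_relabel_set)
  show "subtree_size n (move 0 a b p) v = subtree_size n p v" if "v \<notin> {a, b}"
    using size[of v] that by (simp add: mem_relabel_set subtree_size_descendants descendants_def)
qed

lemma move_inj_on_trees:
  assumes t: "is_tree n p" "is_tree n p'" and ab: "a \<in> {1..n}" "b \<in> {1..n}" "a \<noteq> b"
    and eq: "move 0 a b p = move 0 a b p'"
  shows "p = p'"
proof (rule move_inj[OF _ eq])
  have "depth p (p a) < depth p a" "depth p (p b) < depth p b"
    "depth p' (p' a) < depth p' a" "depth p' (p' b) < depth p' b"
    using tree_depth_less[OF t(1)] tree_depth_less[OF t(2)] ab by auto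
  then show "p a \<noteq> a" "p b \<noteq> b" "\<not> (p a = b \<and> p b = a)"
    "p' a \<noteq> a" "p' b \<noteq> b" "\<not> (p' a = b \<and> p' b = a)"
    by auto
  show "\<not> (p a = 0 \<and> p b = 0)" "\<not> (p' a = 0 \<and> p' b = 0)"
    using tree_root_unique[OF t(1) ab(1,2)] tree_root_unique[OF t(2) ab(1,2)] ab(3) by auto
qed (use ab in auto)

section \<open>The augmented action\<close>

lemma sigma_eq_move: "sigma i p = move 0 i (Suc i) p"
proof
  fix x
  consider "x = i" | "x = Suc i" | "x \<noteq> i" "x \<noteq> Suc i"
    by blast
  then show "sigma i p x = move 0 i (Suc i) p x"
    by cases (auto simp: sigma_def Let_def xch_def swp_def move_def move_fst_def move_snd_def
        move_other_def swap_case_def)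
qed

lemma is_tree_sigma: "is_tree n p \<Longrightarrow> 1 \<le> i \<Longrightarrow> Suc i \<le> n \<Longrightarrow> is_tree n (sigma i p)"
  by (simp add: sigma_eq_move is_tree_move)

(* By uniqueness of the root, the reduced weight of v_i is the size of its subtree if v_(i+1) is
   the root and v_i its child, and 0 otherwise. *)

definition step_weight :: "nat \<Rightarrow> (nat \<Rightarrow> nat) \<Rightarrow> nat \<Rightarrow> nat" where
  "step_weight n p i = (if p (Suc i) = 0 \<and> p i = Suc i then subtree_size n p i else 0)"

(* Writing the residue as e mod n lets the weights of consecutive steps simply add up. *)

lemma sigma_aug_mod:
  assumes t: "is_tree n p" and i: "1 \<le> i" "Suc i \<le> n"
  shows "sigma_aug n i (p, e mod n) = (sigma i p, (e + step_weight n p i) mod n)"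
proof (cases "p (Suc i) = 0")
  case True
  have ab: "i \<in> {1..n}" "Suc i \<in> {1..n}" using i by auto
  then have "p i \<noteq> 0"
    using tree_root_unique[OF t ab] True by auto
  then have "p (p i) = 0 \<longleftrightarrow> p i = Suc i"
    using tree_root_unique[OF t tree_parent_in[OF t] ab(2)] True by auto
  then have "red_weight n p i = step_weight n p i"
    using True \<open>p i \<noteq> 0\<close> by (simp add: red_weight_def step_weight_def)
  then show ?thesis
    using True by (simp add: sigma_aug_def mod_add_left_eq)
qed (simp add: sigma_aug_def step_weight_def)

lemma step_weight_move_far:
  assumes t: "is_tree n p" and cd: "c \<in> {1..n}" "d \<in> {1..n}" "c \<noteq> d"
    and far: "i \<notin> {c, d}" "Suc i \<notin> {c, d}"
  shows "step_weight n (move 0 c d p) i = step_weight n p i"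
proof -
  define g where "g = move_other 0 c d (p c) (p d)"
  have g: "inj g" "g 0 = 0" "g (Suc i) = Suc i"
    using cd far by (auto simp: g_def move_other_inj intro!: move_other_fixed)
  have "move 0 c d p i = g (p i)" "move 0 c d p (Suc i) = g (p (Suc i))"
    using far by (auto simp: move_def g_def)
  then have "move 0 c d p (Suc i) = 0 \<longleftrightarrow> p (Suc i) = 0" "move 0 c d p i = Suc i \<longleftrightarrow> p i = Suc i"
    using g by (metis injD)+
  then show ?thesis
    using subtree_size_move(3)[OF t cd, of i] far by (simp add: step_weight_def)
qed

lemma sigma_aug_commute:
  assumes t: "is_tree n p" and ij: "1 \<le> i" "i + 2 \<le> j" "Suc j \<le> n"
  shows "sigma_aug n i (sigma_aug n j (p, e mod n)) = sigma_aug n j (sigma_aug n i (p, e mod n))"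
proof -
  have "sigma i (sigma j p) = sigma j (sigma i p)"
    unfolding sigma_eq_move using ij by (intro move_commute) auto
  moreover have "step_weight n (sigma j p) i = step_weight n p i" "step_weight n (sigma i p) j = step_weight n p j"
    unfolding sigma_eq_move using ij by (auto intro!: step_weight_move_far[OF t])
  ultimately show ?thesis
    using ij by (simp add: sigma_aug_mod t is_tree_sigma ac_simps)
qed

lemma braid_weights:
  assumes t: "is_tree n p" and i: "1 \<le> i" "Suc (Suc i) \<le> n"
  shows "step_weight n p i + step_weight n (sigma i p) (Suc i) + step_weight n (sigma (Suc i) (sigma i p)) i =
    step_weight n p (Suc i) + step_weight n (sigma (Suc i) p) i + step_weight n (sigma i (sigma (Suc i) p)) (Suc i)"
proof -
  define a b c where "a = i" and "b = Suc i" and "c = Suc (Suc i)"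
  have abc: "a \<in> {1..n}" "b \<in> {1..n}" "c \<in> {1..n}" "distinct [0, a, b, c]" "distinct [a, b, c]"
    and succ: "Suc a = b" "Suc b = c"
    using i by (auto simp: a_def b_def c_def)
  define p1 p2 q1 q2 where "p1 = move 0 a b p" and "p2 = move 0 b c p1"
    and "q1 = move 0 b c p" and "q2 = move 0 a b q1"
  define t where "t = (p a, p b, p c)"
  have trees: "is_tree n p1" "is_tree n q1"
    using is_tree_move[OF t] abc by (auto simp: p1_def q1_def)
  have tri: "(p1 a, p1 b, p1 c) = move_ab 0 a b t" "(p2 a, p2 b, p2 c) = move_bc 0 b c (move_ab 0 a b t)"
    "(q1 a, q1 b, q1 c) = move_bc 0 b c t" "(q2 a, q2 b, q2 c) = move_ab 0 a b (move_bc 0 b c t)"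
    by (simp_all add: p1_def p2_def q1_def q2_def t_def move_triple[OF abc(5)])
  define A B where "A = int (subtree_size n p a)" and "B = int (subtree_size n p b)"
  have sizes: "int (subtree_size n p1 b) = A" "int (subtree_size n p2 a) = size_ab 0 a b t A B"
    "int (subtree_size n q1 a) = A" "int (subtree_size n q2 b) = A"
    using subtree_size_move[OF t abc(1,2)] subtree_size_move[OF t abc(2,3)]
      subtree_size_move[OF trees(1) abc(2,3)] subtree_size_move[OF trees(2) abc(1,2)] abc
    by (auto simp: p1_def p2_def q1_def q2_def A_def B_def t_def size_ab_def)
  have "int (step_weight n r a) = (if top_ab 0 b (r a, r b, r c) then int (subtree_size n r a) else 0)"
    "int (step_weight n r b) = (if top_bc 0 c (r a, r b, r c) then int (subtree_size n r b) else 0)" for r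
    by (simp_all add: step_weight_def top_ab_def top_bc_def succ)
  then have weights:
    "int (step_weight n p a + step_weight n p1 b + step_weight n p2 a) =
       (if top_ab 0 b t then A else 0) + (if top_bc 0 c (move_ab 0 a b t) then A else 0) +
       (if top_ab 0 b (move_bc 0 b c (move_ab 0 a b t)) then size_ab 0 a b t A B else 0)"
    "int (step_weight n p b + step_weight n q1 a + step_weight n q2 b) =
       (if top_bc 0 c t then B else 0) + (if top_ab 0 b (move_bc 0 b c t) then A else 0) +
       (if top_bc 0 c (move_ab 0 a b (move_bc 0 b c t)) then A else 0)"
    by (simp_all only: of_nat_add tri sizes t_def A_def B_def)
  have "weight_local 0 a b c t A B"
    using local_relations(2)[OF abc(4) tree_admissible[OF t abc(1-3,5)]] by (simp add: t_def)
  then have "step_weight n p a + step_weight n p1 b + step_weight n p2 a =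
      step_weight n p b + step_weight n q1 a + step_weight n q2 b"
    using weights unfolding weight_local_def Let_def by linarith
  then show ?thesis
    by (simp add: sigma_eq_move p1_def p2_def q1_def q2_def a_def b_def c_def)
qed

lemma sigma_aug_braid:
  assumes t: "is_tree n p" and i: "1 \<le> i" "Suc (Suc i) \<le> n"
  shows "sigma_aug n i (sigma_aug n (Suc i) (sigma_aug n i (p, e mod n))) =
    sigma_aug n (Suc i) (sigma_aug n i (sigma_aug n (Suc i) (p, e mod n)))"
proof -
  have "sigma i (sigma (Suc i) (sigma i p)) = sigma (Suc i) (sigma i (sigma (Suc i) p))"
    using move_braid[of 0 i "Suc i" "Suc (Suc i)" p] tree_admissible[OF t, of i "Suc i" "Suc (Suc i)"] i
    by (simp add: sigma_eq_move)
  moreover have "sigma_aug n i (sigma_aug n (Suc i) (sigma_aug n i (p, e mod n))) =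
      (sigma i (sigma (Suc i) (sigma i p)),
       (e + (step_weight n p i + step_weight n (sigma i p) (Suc i) + step_weight n (sigma (Suc i) (sigma i p)) i)) mod n)"
    and "sigma_aug n (Suc i) (sigma_aug n i (sigma_aug n (Suc i) (p, e mod n))) =
      (sigma (Suc i) (sigma i (sigma (Suc i) p)),
       (e + (step_weight n p (Suc i) + step_weight n (sigma (Suc i) p) i + step_weight n (sigma i (sigma (Suc i) p)) (Suc i))) mod n)"
    using i by (simp_all add: sigma_aug_mod t is_tree_sigma add.assoc)
  ultimately show ?thesis
    using braid_weights[OF t i] by simp
qed

lemma aug_trees_cases:
  assumes "x \<in> aug_trees n"
  obtains p e where "x = (p, e mod n)" "is_tree n p" "e < n"
proof -
  obtain p e where "x = (p, e)" "is_tree n p" "e < n"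
    using assms by (auto simp: aug_trees_def trees_def)
  then show thesis
    using that by simp
qed

lemma sigma_aug_in_aug_trees:
  assumes "x \<in> aug_trees n" "1 \<le> i" "Suc i \<le> n"
  shows "sigma_aug n i x \<in> aug_trees n"
proof -
  obtain p e where "x = (p, e mod n)" "is_tree n p"
    using assms(1) by (rule aug_trees_cases)
  then show ?thesis
    using assms(2,3) by (simp add: sigma_aug_mod is_tree_sigma aug_trees_def trees_def)
qed

lemma mod_add_right_cancel_nat:
  fixes e e' w n :: nat
  assumes "(e + w) mod n = (e' + w) mod n" "e < n" "e' < n"
  shows "e = e'"
proof -
  have "(int e + int w) mod int n = (int e' + int w) mod int n"
    using assms(1) by (simp flip: of_nat_add of_nat_mod)
  then have "(int e + int w + - int w) mod int n = (int e' + int w + - int w) mod int n"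
    by (rule mod_add_cong) simp
  then have "int e mod int n = int e' mod int n"
    by simp
  then show ?thesis
    using assms(2,3) by (simp flip: of_nat_mod)
qed

lemma sigma_aug_inj_on:
  assumes i: "1 \<le> i" "Suc i \<le> n"
  shows "inj_on (sigma_aug n i) (aug_trees n)"
proof
  fix x y assume x: "x \<in> aug_trees n" and y: "y \<in> aug_trees n" and eq: "sigma_aug n i x = sigma_aug n i y"
  obtain p e where xe: "x = (p, e mod n)" "is_tree n p" "e < n"
    using x by (rule aug_trees_cases)
  obtain p' e' where ye: "y = (p', e' mod n)" "is_tree n p'" "e' < n"
    using y by (rule aug_trees_cases)
  have "move 0 i (Suc i) p = move 0 i (Suc i) p'"
    using eq i xe(2) ye(2) unfolding xe(1) ye(1) by (simp add: sigma_aug_mod sigma_eq_move)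
  then have "p = p'"
    using i by (intro move_inj_on_trees[OF xe(2) ye(2), of i "Suc i"]) auto
  then have "(e + step_weight n p i) mod n = (e' + step_weight n p i) mod n"
    using eq i xe(2) unfolding xe(1) ye(1) by (simp add: sigma_aug_mod)
  then have "e = e'"
    using xe(3) ye(3) by (rule mod_add_right_cancel_nat)
  then show "x = y"
    using xe(1) ye(1) \<open>p = p'\<close> by simp
qed

lemma finite_trees: "finite (trees n)"
proof (rule finite_imageD)
  let ?f = "\<lambda>p. map p [1..<Suc n]"
  have "?f ` trees n \<subseteq> {xs. set xs \<subseteq> {..n} \<and> length xs = n}"
    by (auto simp: trees_def tree_le)
  then show "finite (?f ` trees n)"
    by (rule finite_subset) (simp add: finite_lists_length_eq)
  show "inj_on ?f (trees n)"
  proof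
    fix p q assume p: "p \<in> trees n" and q: "q \<in> trees n" and eq: "?f p = ?f q"
    show "p = q"
    proof
      fix v
      show "p v = q v"
      proof (cases "v \<in> {1..n}")
        case True
        then have "v \<in> set [1..<Suc n]"
          by auto
        then show ?thesis
          using eq unfolding map_eq_conv by blast
      next
        case False
        then show ?thesis
          using p q by (simp add: trees_def tree_outside)
      qed
    qed
  qed
qed

lemma bij_sigma_aug:
  assumes "1 \<le> i" "Suc i \<le> n"
  shows "bij_betw (sigma_aug n i) (aug_trees n) (aug_trees n)"
proof -
  have "finite (aug_trees n)"
    by (simp add: aug_trees_def finite_trees)
  moreover have "sigma_aug n i ` aug_trees n \<subseteq> aug_trees n"
    using sigma_aug_in_aug_trees assms by blast
  ultimately show ?thesis
    using sigma_aug_inj_on[OF assms] by (simp add: bij_betw_def endo_inj_surj)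
qed

theorem theorem1p12:
  fixes n :: nat
  assumes "n \<ge> 2"
  shows "(\<forall>i\<in>{1..n-1}. bij_betw (sigma_aug n i) (aug_trees n) (aug_trees n))
    \<and> (\<forall>i\<in>{1..n-1}. \<forall>j\<in>{1..n-1}. (i + 2 \<le> j \<or> j + 2 \<le> i) \<longrightarrow>
          (\<forall>x\<in>aug_trees n. sigma_aug n i (sigma_aug n j x) = sigma_aug n j (sigma_aug n i x)))
    \<and> (\<forall>i\<in>{1..n-2}. \<forall>x\<in>aug_trees n.
          sigma_aug n i (sigma_aug n (Suc i) (sigma_aug n i x)) =
          sigma_aug n (Suc i) (sigma_aug n i (sigma_aug n (Suc i) x)))"
proof (intro conjI ballI impI)
  fix i assume "i \<in> {1..n-1}"
  then show "bij_betw (sigma_aug n i) (aug_trees n) (aug_trees n)"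
    by (intro bij_sigma_aug) auto
next
  fix i j x assume i: "i \<in> {1..n-1}" and j: "j \<in> {1..n-1}" and far: "i + 2 \<le> j \<or> j + 2 \<le> i"
    and "x \<in> aug_trees n"
  then obtain p e where x: "x = (p, e mod n)" and t: "is_tree n p"
    using aug_trees_cases by metis
  show "sigma_aug n i (sigma_aug n j x) = sigma_aug n j (sigma_aug n i x)"
    using far sigma_aug_commute[OF t, of i j e] sigma_aug_commute[OF t, of j i e] i j
    unfolding x by auto
next
  fix i x assume i: "i \<in> {1..n-2}" and "x \<in> aug_trees n"
  then obtain p e where x: "x = (p, e mod n)" and t: "is_tree n p"
    using aug_trees_cases by metis
  show "sigma_aug n i (sigma_aug n (Suc i) (sigma_aug n i x)) =
      sigma_aug n (Suc i) (sigma_aug n i (sigma_aug n (Suc i) x))"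
    unfolding x using sigma_aug_braid[OF t, of i e] i by auto
qed

end
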